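(* Let $\mathbb{K}$ be a field of characteristic zero, let $s,t$ be commuting variables, and work in the noncommutative polynomial algebra $\mathbb{K}[s,t]\langle x,y\rangle$. For a variable $r\in\{s,t,s+t\}$ let $\sigma_r$ be the algebra automorphism with $\sigma_r(x)=x$, $\sigma_r(y)=rx+y$, and let $S_r$ be the $\mathbb{K}[s,t]$-linear map with $S_r(1)=1$ and $S_r(wa)=\sigma_r(w)a$ for every word $w$ and every letter $a\in\{x,y\}$. Then $$\sigma_s\circ\sigma_t=\sigma_{s+t},\qquad S_s\circ S_t=S_{s+t}.$$
   Context: Words are monomials in the noncommuting letters $x,y$; $1$ denotes the empty word. *)

theory Defs
  imports "HOL-Library.Poly_Mapping" "HOL-Computational_Algebra.Polynomial"
begin

text \<open>Letters x, y and words (free monoid on {x,y}); the monoid operation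
  (written +) is concatenation, 0 is the empty word 1.\<close>
datatype letter = LX | LY

datatype word = Word "letter list"

instantiation word :: monoid_add
begin
definition zero_word :: word where "zero_word = Word []"
fun plus_word :: "word \<Rightarrow> word \<Rightarrow> word" where
  "plus_word (Word u) (Word v) = Word (u @ v)"
instance
proof
  fix a b c :: word
  show "a + b + c = a + (b + c)" by (cases a; cases b; cases c) simp
  show "0 + a = a" by (cases a) (simp add: zero_word_def)
  show "a + 0 = a" by (cases a) (simp add: zero_word_def)
qed
end

text \<open>Coefficient ring K[s,t], realised as (K[s])[t]; noncommutative
  polynomials K[s,t]<x,y> as finitely supported maps from words to
  coefficients, with convolution product (monoid algebra of the free monoid).\<close>
type_synonym 'k coeff = "'k poly poly"
type_synonym 'k ncpoly = "word \<Rightarrow>\<^sub>0 'k coeff"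

definition var_s :: "'k::field_char_0 coeff" where "var_s = [:[:0, 1:]:]"
definition var_t :: "'k::field_char_0 coeff" where "var_t = [:0, 1:]"

definition ncconst :: "'k::field_char_0 coeff \<Rightarrow> 'k ncpoly" where
  "ncconst c = Poly_Mapping.single (Word []) c"

definition ncletter :: "letter \<Rightarrow> 'k::field_char_0 ncpoly" where
  "ncletter a = Poly_Mapping.single (Word [a]) 1"

fun sigma_letter :: "'k::field_char_0 coeff \<Rightarrow> letter \<Rightarrow> 'k ncpoly" where
  "sigma_letter r LX = ncletter LX"
| "sigma_letter r LY = ncconst r * ncletter LX + ncletter LY"

fun sigma_word :: "'k::field_char_0 coeff \<Rightarrow> word \<Rightarrow> 'k ncpoly" where
  "sigma_word r (Word ws) = prod_list (map (sigma_letter r) ws)"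

definition sigma :: "'k::field_char_0 coeff \<Rightarrow> 'k ncpoly \<Rightarrow> 'k ncpoly" where
  "sigma r p = (\<Sum>w\<in>Poly_Mapping.keys p. ncconst (Poly_Mapping.lookup p w) * sigma_word r w)"

fun S_word :: "'k::field_char_0 coeff \<Rightarrow> word \<Rightarrow> 'k ncpoly" where
  "S_word r (Word ws) =
     (if ws = [] then 1 else sigma_word r (Word (butlast ws)) * ncletter (last ws))"

definition S_map :: "'k::field_char_0 coeff \<Rightarrow> 'k ncpoly \<Rightarrow> 'k ncpoly" where
  "S_map r p = (\<Sum>w\<in>Poly_Mapping.keys p. ncconst (Poly_Mapping.lookup p w) * S_word r w)"

end

theory Submission
  imports Defs
begin

text \<open>Both sigma_s \<circ> sigma_t and sigma_(s+t) are algebra endomorphisms, and they agree on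
  the generators: x goes to x, and y goes to t x + y and then to t x + (s x + y).
  For S, linearity gives S_s(p a) = sigma_s(p) a, so
  S_s(S_t(w a)) = S_s(sigma_t(w) a) = sigma_s(sigma_t(w)) a = sigma_(s+t)(w) a.
  Neither argument uses what s and t are, so both identities hold for arbitrary coefficients.\<close>

definition lin_ext :: "(word \<Rightarrow> 'k::field_char_0 ncpoly) \<Rightarrow> 'k ncpoly \<Rightarrow> 'k ncpoly" where
  "lin_ext f p = (\<Sum>w\<in>Poly_Mapping.keys p. ncconst (Poly_Mapping.lookup p w) * f w)"

lemma sigma_eq_lin_ext: "sigma r = lin_ext (sigma_word r)"
  by (simp add: fun_eq_iff sigma_def lin_ext_def)

lemma S_map_eq_lin_ext: "S_map r = lin_ext (S_word r)"
  by (simp add: fun_eq_iff S_map_def lin_ext_def)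

lemma poly_mapping_single_add_induct:
  assumes "P 0" "\<And>w c. P (Poly_Mapping.single w c)" "\<And>p q. P p \<Longrightarrow> P q \<Longrightarrow> P (p + q)"
  shows "P p"
proof (induction p rule: Poly_Mapping.update_induct)
  case const then show ?case using assms(1) .
next
  case (update f a b)
  have "Poly_Mapping.update a b f = f + Poly_Mapping.single a b"
    using update(1)
    by (intro Poly_Mapping.poly_mapping_eqI)
       (auto simp: Poly_Mapping.lookup_update Poly_Mapping.lookup_add Poly_Mapping.lookup_single
          Poly_Mapping.in_keys_iff when_def)
  then show ?case using assms(2,3) update(3) by simp
qed

lemma ncconst_1 [simp]: "ncconst 1 = 1"
  by (simp add: ncconst_def zero_word_def[symmetric])

lemma ncconst_add: "ncconst (a + b) = ncconst a + ncconst b"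
  by (simp add: ncconst_def Poly_Mapping.single_add)

lemma ncconst_mult_single: "ncconst c * Poly_Mapping.single w d = Poly_Mapping.single w (c * d)"
  by (simp add: ncconst_def Poly_Mapping.mult_single zero_word_def[symmetric])

lemma ncconst_mult: "ncconst (a * b) = ncconst a * ncconst b"
  by (simp add: ncconst_def Poly_Mapping.mult_single zero_word_def[symmetric])

lemma ncconst_commute: "ncconst c * p = p * ncconst c"
  by (induction p rule: poly_mapping_single_add_induct)
     (simp_all add: ncconst_def Poly_Mapping.mult_single zero_word_def[symmetric]
        distrib_left distrib_right mult.commute)

lemma lin_ext_0 [simp]: "lin_ext f 0 = 0"
  by (simp add: lin_ext_def)

lemma lin_ext_single [simp]: "lin_ext f (Poly_Mapping.single w c) = ncconst c * f w"
  by (simp add: lin_ext_def ncconst_def)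

lemma lin_ext_1: "lin_ext f 1 = f (Word [])"
  by (simp add: lin_ext_def zero_word_def[symmetric])

lemma lin_ext_ncletter [simp]: "lin_ext f (ncletter a) = f (Word [a])"
  by (simp add: ncletter_def)

lemma lin_ext_superset:
  assumes "finite A" "Poly_Mapping.keys p \<subseteq> A"
  shows "lin_ext f p = (\<Sum>w\<in>A. ncconst (Poly_Mapping.lookup p w) * f w)"
  unfolding lin_ext_def
  by (rule sum.mono_neutral_left) (use assms in \<open>auto simp: Poly_Mapping.in_keys_iff ncconst_def\<close>)

lemma lin_ext_add: "lin_ext f (p + q) = lin_ext f p + lin_ext f q"
proof -
  let ?A = "Poly_Mapping.keys p \<union> Poly_Mapping.keys q"
  have "lin_ext f (p + q) = (\<Sum>w\<in>?A. ncconst (Poly_Mapping.lookup (p + q) w) * f w)"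
    by (rule lin_ext_superset) (auto dest: set_mp[OF Poly_Mapping.keys_add])
  also have "\<dots> = (\<Sum>w\<in>?A. ncconst (Poly_Mapping.lookup p w) * f w)
                 + (\<Sum>w\<in>?A. ncconst (Poly_Mapping.lookup q w) * f w)"
    by (simp add: Poly_Mapping.lookup_add ncconst_add distrib_right sum.distrib)
  also have "\<dots> = lin_ext f p + lin_ext f q"
    using lin_ext_superset[of ?A p f] lin_ext_superset[of ?A q f] by simp
  finally show ?thesis .
qed

lemma lin_ext_ncconst_mult: "lin_ext f (ncconst c * p) = ncconst c * lin_ext f p"
  by (induction p rule: poly_mapping_single_add_induct)
     (simp_all add: lin_ext_add distrib_left ncconst_mult_single ncconst_mult mult.assoc)

lemma sigma_word_plus: "sigma_word r (v + w) = sigma_word r v * sigma_word r w"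
  by (cases v; cases w) simp

lemma lin_ext_sigma_word_mult:
  "lin_ext (sigma_word r) (p * q) = lin_ext (sigma_word r) p * lin_ext (sigma_word r) q"
proof -
  have single_mult: "lin_ext (sigma_word r) (Poly_Mapping.single v a * Poly_Mapping.single w b)
      = (ncconst a * sigma_word r v) * (ncconst b * sigma_word r w)" for v w a b
  proof -
    have "lin_ext (sigma_word r) (Poly_Mapping.single v a * Poly_Mapping.single w b)
        = ncconst a * (ncconst b * sigma_word r v) * sigma_word r w"
      by (simp add: Poly_Mapping.mult_single sigma_word_plus ncconst_mult mult.assoc)
    then show ?thesis
      by (simp add: ncconst_commute[of b] mult.assoc)
  qed
  show ?thesis
  proof (induction p rule: poly_mapping_single_add_induct)
    case (2 v a)
    show ?case
      by (induction q rule: poly_mapping_single_add_induct)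
         (simp_all add: single_mult distrib_left lin_ext_add)
  qed (simp_all add: distrib_right lin_ext_add)
qed

lemma lin_ext_sigma_word_sigma_word:
  "lin_ext (sigma_word s) (sigma_word t w) = sigma_word (s + t) w"
proof -
  have letter: "lin_ext (sigma_word s) (sigma_letter t a) = sigma_letter (s + t) a" for a
    by (cases a) (simp_all add: lin_ext_add lin_ext_ncconst_mult ncconst_add distrib_right add_ac)
  obtain l where "w = Word l" by (cases w)
  then show ?thesis
    by (induction l arbitrary: w) (simp_all add: lin_ext_1 lin_ext_sigma_word_mult letter)
qed

lemma sigma_comp: "sigma s \<circ> sigma t = sigma (s + t)"
proof
  fix p
  show "(sigma s \<circ> sigma t) p = sigma (s + t) p"
    unfolding comp_def sigma_eq_lin_ext
    by (induction p rule: poly_mapping_single_add_induct)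
       (simp_all add: lin_ext_add lin_ext_ncconst_mult lin_ext_sigma_word_sigma_word)
qed

lemma lin_ext_S_word_mult_ncletter:
  "lin_ext (S_word s) (p * ncletter a) = lin_ext (sigma_word s) p * ncletter a"
proof (induction p rule: poly_mapping_single_add_induct)
  case 1 then show ?case by simp
next
  case (2 v c)
  obtain l where "v = Word l" by (cases v)
  then show ?case by (simp add: ncletter_def Poly_Mapping.mult_single mult.assoc)
next
  case (3 p q) then show ?case by (simp add: distrib_right lin_ext_add)
qed

lemma lin_ext_S_word_S_word: "lin_ext (S_word s) (S_word t w) = S_word (s + t) w"
proof -
  obtain l where w: "w = Word l" by (cases w)
  show ?thesis
  proof (cases "l = []")
    case True then show ?thesis using w by (simp add: lin_ext_1)
  next
    case False then show ?thesis
      using w lin_ext_sigma_word_sigma_word[of s t "Word (butlast l)"]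
      by (simp add: lin_ext_S_word_mult_ncletter)
  qed
qed

lemma S_map_comp: "S_map s \<circ> S_map t = S_map (s + t)"
proof
  fix p
  show "(S_map s \<circ> S_map t) p = S_map (s + t) p"
    unfolding comp_def S_map_eq_lin_ext
    by (induction p rule: poly_mapping_single_add_induct)
       (simp_all add: lin_ext_add lin_ext_ncconst_mult lin_ext_S_word_S_word)
qed

theorem lemma2p1:
  shows "sigma (var_s :: 'k::field_char_0 coeff) \<circ> sigma var_t = sigma (var_s + var_t)
       \<and> S_map (var_s :: 'k::field_char_0 coeff) \<circ> S_map var_t = S_map (var_s + var_t)"
  by (simp add: sigma_comp S_map_comp)

end
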